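(* Let $n>1$, let $\mathbf{A}\in\mathbb{R}^{n\times n}$ be symmetric with $\mathbf{I}-\mathbf{A}$ invertible, $\mathbf{b}\in\mathbb{R}^n$, $\mathcal{FP}(\mathbf{x})=\mathbf{A}\mathbf{x}+\mathbf{b}$, and $\mathbf{x}^\star$ the unique fixed point of $\mathcal{FP}$. Let $\mathbf{v}_1,\mathbf{v}_2$ be two orthogonal eigenvectors of $\mathbf{A}$ with eigenvalues $\lambda_1,\lambda_2\ne0$, and let $\mathbf{x}^0$ satisfy $\mathbf{x}^0-\mathbf{x}^\star\in\mathrm{span}\{\mathbf{v}_1,\mathbf{v}_2\}$. Let $\{\mathbf{x}^i\}$ be the sequence generated by AA$^\star$(1) applied to $\mathcal{FP}$ from $\mathbf{x}^0$, and $\mathbf{e}^i=\mathbf{x}^i-\mathbf{x}^\star$. Then $$\|\mathbf{e}^{i+4}\|\le r(\lambda_1,\lambda_2)\|\mathbf{e}^i\|\quad\text{for } i=0,4,8,12,\dots,\qquad r(\lambda_1,\lambda_2)=\frac{\lambda_1^2\lambda_2^2(\lambda_2-\lambda_1)^2}{\big(|\lambda_1(\lambda_1-1)|+|\lambda_2(\lambda_2-1)|\big)^2}.$$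
   Context: Let $\Delta\mathcal{FP}(\mathbf{x})=\mathcal{FP}(\mathbf{x})-\mathbf{x}$ and $\|\cdot\|$ the Euclidean norm. The restarted Anderson acceleration AA$^\star$(1) is the iteration: for $i=0,2,4,\dots$, set $\mathbf{x}^{i+1}=\mathcal{FP}(\mathbf{x}^i)$; choose $\alpha^{(i+1)}\in\mathbb{R}$ minimizing $\|\Delta\mathcal{FP}(\mathbf{x}^{i+1})+\alpha^{(i+1)}(\Delta\mathcal{FP}(\mathbf{x}^i)-\Delta\mathcal{FP}(\mathbf{x}^{i+1}))\|$; set $\mathbf{x}^{i+2}=\mathcal{FP}(\mathbf{x}^{i+1})+\alpha^{(i+1)}(\mathcal{FP}(\mathbf{x}^i)-\mathcal{FP}(\mathbf{x}^{i+1}))$. *)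

theory Defs
  imports "HOL-Analysis.Analysis"
begin

definition DeltaFP :: "('a::real_normed_vector \<Rightarrow> 'a) \<Rightarrow> 'a \<Rightarrow> 'a" where
  "DeltaFP FP x = FP x - x"

definition AA_star1_seq ::
  "('a::real_normed_vector \<Rightarrow> 'a) \<Rightarrow> (nat \<Rightarrow> 'a) \<Rightarrow> (nat \<Rightarrow> real) \<Rightarrow> bool" where
  "AA_star1_seq FP x alpha \<longleftrightarrow>
     (\<forall>i. even i \<longrightarrow>
        x (i + 1) = FP (x i) \<and>
        (\<forall>\<beta>::real. norm (DeltaFP FP (x (i + 1)) + alpha (i + 1) *\<^sub>R (DeltaFP FP (x i) - DeltaFP FP (x (i + 1))))
                  \<le> norm (DeltaFP FP (x (i + 1)) + \<beta> *\<^sub>R (DeltaFP FP (x i) - DeltaFP FP (x (i + 1))))) \<and>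
        x (i + 2) = FP (x (i + 1)) + alpha (i + 1) *\<^sub>R (FP (x i) - FP (x (i + 1))))"

definition rate :: "real \<Rightarrow> real \<Rightarrow> real" where
  "rate l1 l2 = (l1^2 * l2^2 * (l2 - l1)^2) / (\<bar>l1 * (l1 - 1)\<bar> + \<bar>l2 * (l2 - 1)\<bar>)^2"

end

theory Submission
  imports Defs
begin

text \<open>Write the error on the eigenplane as \<open>e = a v1 + c v2\<close> and \<open>\<mu>j = \<lambda>j - 1\<close>. The
  optimal mixing coefficient of one AA*(1) step is an explicit least-squares quotient, and
  substituting it makes each new coefficient proportional to the \<^emph>\<open>other\<close> old one:
  \<open>(a, c) \<mapsto> k (P c, R a)\<close> with a scalar gain \<open>k\<close> and constants \<open>P\<close>, \<open>R\<close>. Two steps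
  therefore multiply the error by a single scalar \<open>M\<close>, which equals
  \<open>(\<lambda>2 - \<lambda>1)\<^sup>2 \<lambda>1\<^sup>2 \<lambda>2\<^sup>2 X Y / ((X \<mu>1\<^sup>2 + Y \<mu>2\<^sup>2) (X \<lambda>2\<^sup>2 + Y \<lambda>1\<^sup>2))\<close> for suitable
  \<open>X, Y \<ge> 0\<close>; the Cauchy-Schwarz inequality bounds it by \<open>r(\<lambda>1, \<lambda>2)\<close>.\<close>

lemma norm_add_scaleR_argmin:
  fixes u w :: "'a::real_inner"
  assumes "w \<noteq> 0" and "\<forall>\<beta>. norm (u + \<alpha> *\<^sub>R w) \<le> norm (u + \<beta> *\<^sub>R w)"
  shows "\<alpha> = - (u \<bullet> w) / (w \<bullet> w)"
proof -
  define \<beta>\<^sub>0 where "\<beta>\<^sub>0 = - (u \<bullet> w) / (w \<bullet> w)"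
  have ww: "w \<bullet> w > 0" using assms(1) by simp
  have expand: "(norm (u + \<beta> *\<^sub>R w))\<^sup>2 = u \<bullet> u + 2 * \<beta> * (u \<bullet> w) + \<beta>\<^sup>2 * (w \<bullet> w)" for \<beta>
    unfolding power2_norm_eq_inner
    by (simp add: inner_add_left inner_add_right inner_commute algebra_simps power2_eq_square)
  have sq: "(norm (u + \<beta> *\<^sub>R w))\<^sup>2 = (norm (u + \<beta>\<^sub>0 *\<^sub>R w))\<^sup>2 + (\<beta> - \<beta>\<^sub>0)\<^sup>2 * (w \<bullet> w)" for \<beta>
    using ww unfolding expand \<beta>\<^sub>0_def by (simp add: field_simps power2_eq_square)
  have "(norm (u + \<alpha> *\<^sub>R w))\<^sup>2 \<le> (norm (u + \<beta>\<^sub>0 *\<^sub>R w))\<^sup>2"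
    using assms(2) by (simp add: power_mono)
  then have "(\<alpha> - \<beta>\<^sub>0)\<^sup>2 * (w \<bullet> w) \<le> 0" unfolding sq[of \<alpha>] by simp
  then show ?thesis using ww unfolding \<beta>\<^sub>0_def by (simp add: mult_le_0_iff)
qed

lemma cauchy_schwarz_cross_weighted:
  fixes X Y l1 l2 b1 b2 :: real
  assumes "X \<ge> 0" "Y \<ge> 0"
  shows "X * Y * (\<bar>l1 * b1\<bar> + \<bar>l2 * b2\<bar>)\<^sup>2 \<le> (X * b1\<^sup>2 + Y * b2\<^sup>2) * (X * l2\<^sup>2 + Y * l1\<^sup>2)"
proof -
  have "(X * b1\<^sup>2 + Y * b2\<^sup>2) * (X * l2\<^sup>2 + Y * l1\<^sup>2) - X * Y * (\<bar>l1 * b1\<bar> + \<bar>l2 * b2\<bar>)\<^sup>2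
      = (X * \<bar>b1\<bar> * \<bar>l2\<bar> - Y * \<bar>b2\<bar> * \<bar>l1\<bar>)\<^sup>2"
  proof -
    have sq_abs: "b1\<^sup>2 = \<bar>b1\<bar>\<^sup>2" "b2\<^sup>2 = \<bar>b2\<bar>\<^sup>2" "l1\<^sup>2 = \<bar>l1\<bar>\<^sup>2" "l2\<^sup>2 = \<bar>l2\<bar>\<^sup>2"
      by simp_all
    show ?thesis unfolding sq_abs abs_mult by algebra
  qed
  moreover have "(X * \<bar>b1\<bar> * \<bar>l2\<bar> - Y * \<bar>b2\<bar> * \<bar>l1\<bar>)\<^sup>2 \<ge> 0" by simp
  ultimately show ?thesis by linarith
qed

lemma two_step_factor_le_rate:
  fixes X Y l1 l2 :: real
  assumes "X \<ge> 0" "Y \<ge> 0"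
  shows "(l2 - l1)\<^sup>2 * l1\<^sup>2 * l2\<^sup>2 * (X * Y)
           / ((X * (l1 - 1)\<^sup>2 + Y * (l2 - 1)\<^sup>2) * (X * l2\<^sup>2 + Y * l1\<^sup>2)) \<le> rate l1 l2"
proof -
  define D where "D = \<bar>l1 * (l1 - 1)\<bar> + \<bar>l2 * (l2 - 1)\<bar>"
  define C where "C = (l2 - l1)\<^sup>2 * l1\<^sup>2 * l2\<^sup>2"
  define QS where "QS = (X * (l1 - 1)\<^sup>2 + Y * (l2 - 1)\<^sup>2) * (X * l2\<^sup>2 + Y * l1\<^sup>2)"
  have rate: "rate l1 l2 = C / D\<^sup>2"
    unfolding rate_def C_def D_def by (simp add: power_mult_distrib)
  have C_nonneg: "C \<ge> 0" unfolding C_def by simp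
  have QS_nonneg: "QS \<ge> 0" unfolding QS_def using assms by simp
  have "C * (X * Y) / QS \<le> C / D\<^sup>2"
  proof (cases "D = 0")
    case True
    then have "l1 * (l1 - 1) = 0" "l2 * (l2 - 1) = 0"
      unfolding D_def by (simp_all add: add_nonneg_eq_0_iff)
    then have "C = 0" unfolding C_def by auto
    then show ?thesis by simp
  next
    case False
    have "X * Y * D\<^sup>2 \<le> QS"
      unfolding D_def QS_def using cauchy_schwarz_cross_weighted[OF assms] .
    then have "X * Y / QS \<le> 1 / D\<^sup>2"
      using False QS_nonneg by (cases "QS = 0") (simp_all add: divide_simps)
    then show ?thesis
      using mult_left_mono[OF _ C_nonneg] by (simp add: divide_inverse mult.assoc)
  qed
  then show ?thesis unfolding rate C_def QS_def .
qed

text \<open>The parameters \<open>n1\<close>, \<open>n2\<close> stand for the squared norms of the two eigenvectors.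
  For \<open>e = a v1 + c v2\<close>, \<open>lsq_den a c\<close> is the squared norm of the residual difference
  \<open>(A - I)\<^sup>2 e\<close>, and \<open>mixing_coeff a c\<close> the least-squares minimiser of the AA*(1) step.\<close>

locale aa_eigenplane =
  fixes l1 l2 n1 n2 :: real
  assumes n1_pos: "n1 > 0" and n2_pos: "n2 > 0"
    and l1_ne_1: "l1 \<noteq> 1" and l2_ne_1: "l2 \<noteq> 1"
begin

definition lsq_den :: "real \<Rightarrow> real \<Rightarrow> real" where
  "lsq_den a c = a\<^sup>2 * (l1 - 1)^4 * n1 + c\<^sup>2 * (l2 - 1)^4 * n2"

definition mixing_coeff :: "real \<Rightarrow> real \<Rightarrow> real" where
  "mixing_coeff a c = (a\<^sup>2 * l1 * (l1 - 1)^3 * n1 + c\<^sup>2 * l2 * (l2 - 1)^3 * n2) / lsq_den a c"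

definition coeff_step :: "real \<times> real \<Rightarrow> real \<times> real" where
  "coeff_step p = (case p of (a, c) \<Rightarrow>
     (a * l1 * (l1 - mixing_coeff a c * (l1 - 1)), c * l2 * (l2 - mixing_coeff a c * (l2 - 1))))"

definition gain :: "real \<Rightarrow> real \<Rightarrow> real" where
  "gain a c = (l2 - l1) * a * c / lsq_den a c"

lemma lsq_den_eq_0_iff: "lsq_den a c = 0 \<longleftrightarrow> a = 0 \<and> c = 0"
proof -
  have "a\<^sup>2 * (l1 - 1)^4 * n1 \<ge> 0" "c\<^sup>2 * (l2 - 1)^4 * n2 \<ge> 0"
    using n1_pos n2_pos by simp_all
  then show ?thesis
    unfolding lsq_den_def using n1_pos n2_pos l1_ne_1 l2_ne_1 by (simp add: add_nonneg_eq_0_iff)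
qed

lemma lsq_den_nonneg: "lsq_den a c \<ge> 0"
  unfolding lsq_den_def using n1_pos n2_pos by simp

lemma coeff_step_factored:
  "coeff_step (a, c) = (gain a c * (n2 * l1 * (l2 - 1)^3) * c, gain a c * (- n1 * l2 * (l1 - 1)^3) * a)"
proof (cases "lsq_den a c = 0")
  case True
  then show ?thesis by (simp add: lsq_den_eq_0_iff coeff_step_def gain_def)
next
  case False
  then show ?thesis
    unfolding coeff_step_def gain_def mixing_coeff_def
    by (simp add: field_simps lsq_den_def) (simp add: algebra_simps power_def)
qed

lemma coeff_step_twice: "\<exists>M. coeff_step (coeff_step p) = M *\<^sub>R p \<and> \<bar>M\<bar> \<le> rate l1 l2"
proof -
  obtain a c where p: "p = (a, c)" by fastforce
  define P where "P = n2 * l1 * (l2 - 1)^3"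
  define R where "R = - n1 * l2 * (l1 - 1)^3"
  define k where "k = gain a c"
  define k' where "k' = gain (k * P * c) (k * R * a)"
  have "coeff_step (coeff_step p) = (k * k' * P * R) *\<^sub>R p"
    unfolding p coeff_step_factored k_def[symmetric] P_def[symmetric] R_def[symmetric] k'_def[symmetric]
    by (simp add: algebra_simps)
  moreover have "\<bar>k * k' * P * R\<bar> \<le> rate l1 l2"
  proof (cases "k = 0")
    case True
    then show ?thesis by (simp add: rate_def)
  next
    case False
    then have "a \<noteq> 0" "c \<noteq> 0" unfolding k_def gain_def by auto
    then have Q_pos: "lsq_den a c > 0"
      using lsq_den_nonneg lsq_den_eq_0_iff by (simp add: order_less_le)
    define X where "X = a\<^sup>2 * n1 * (l1 - 1)\<^sup>2"
    define Y where "Y = c\<^sup>2 * n2 * (l2 - 1)\<^sup>2"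
    define W where "W = n1 * n2 * (l1 - 1)^4 * (l2 - 1)^4"
    define S where "S = X * l2\<^sup>2 + Y * l1\<^sup>2"
    have W_pos: "W > 0" unfolding W_def using n1_pos n2_pos l1_ne_1 l2_ne_1 by simp
    have Q: "lsq_den a c = X * (l1 - 1)\<^sup>2 + Y * (l2 - 1)\<^sup>2"
      unfolding lsq_den_def X_def Y_def by (simp add: algebra_simps power_def)
    have Q': "lsq_den (k * P * c) (k * R * a) = k\<^sup>2 * (W * S)"
      unfolding lsq_den_def W_def S_def X_def Y_def P_def R_def by (simp add: algebra_simps power_def)
    have k': "k' = (l2 - l1) * P * R * a * c / (W * S)"
    proof -
      have "k' = k\<^sup>2 * ((l2 - l1) * P * R * a * c) / (k\<^sup>2 * (W * S))"
        unfolding k'_def gain_def Q' by (simp add: algebra_simps power2_eq_square)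
      then show ?thesis using False by simp
    qed
    have PR: "a\<^sup>2 * c\<^sup>2 * P\<^sup>2 * R\<^sup>2 = X * Y * l1\<^sup>2 * l2\<^sup>2 * W"
      unfolding X_def Y_def P_def R_def W_def by algebra
    have "k * k' * P * R = (l2 - l1)\<^sup>2 * (a\<^sup>2 * c\<^sup>2 * P\<^sup>2 * R\<^sup>2) / (lsq_den a c * (W * S))"
      unfolding k' k_def gain_def by (simp add: field_simps power2_eq_square)
    also have "\<dots> = (l2 - l1)\<^sup>2 * l1\<^sup>2 * l2\<^sup>2 * (X * Y)
                      / ((X * (l1 - 1)\<^sup>2 + Y * (l2 - 1)\<^sup>2) * (X * l2\<^sup>2 + Y * l1\<^sup>2))"
      unfolding PR Q[symmetric] S_def[symmetric] using W_pos by (simp add: field_simps)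
    finally have M: "k * k' * P * R = \<dots>" .
    have "X \<ge> 0" "Y \<ge> 0" unfolding X_def Y_def using n1_pos n2_pos by simp_all
    then show ?thesis unfolding M using two_step_factor_le_rate by simp
  qed
  ultimately show ?thesis by blast
qed

end

locale aa_eigenpair =
  fixes L :: "'a::real_inner \<Rightarrow> 'a" and v1 v2 :: 'a and l1 l2 :: real
  assumes linear_L: "linear L"
    and eigen1: "L v1 = l1 *\<^sub>R v1" and eigen2: "L v2 = l2 *\<^sub>R v2"
    and orthogonal: "v1 \<bullet> v2 = 0" and v1_nonzero: "v1 \<noteq> 0" and v2_nonzero: "v2 \<noteq> 0"
    and l1_ne_1: "l1 \<noteq> 1" and l2_ne_1: "l2 \<noteq> 1"
begin

sublocale aa_eigenplane l1 l2 "v1 \<bullet> v1" "v2 \<bullet> v2"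
  using v1_nonzero v2_nonzero l1_ne_1 l2_ne_1 by unfold_locales simp_all

definition comb :: "real \<times> real \<Rightarrow> 'a" where
  "comb p = fst p *\<^sub>R v1 + snd p *\<^sub>R v2"

lemma L_comb: "L (comb (a, c)) = comb (l1 * a, l2 * c)"
  unfolding comb_def using linear_L eigen1 eigen2
  by (simp add: linear_add linear_scale mult.commute)

lemma comb_diff: "comb p - comb q = comb (p - q)"
  unfolding comb_def by (simp add: algebra_simps)

lemma comb_add: "comb p + comb q = comb (p + q)"
  unfolding comb_def by (simp add: algebra_simps)

lemma comb_scaleR: "comb (M *\<^sub>R p) = M *\<^sub>R comb p"
  unfolding comb_def by (simp add: scaleR_add_right)

lemma inner_comb: "comb (a, c) \<bullet> comb (a', c') = a * a' * (v1 \<bullet> v1) + c * c' * (v2 \<bullet> v2)"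
  unfolding comb_def using orthogonal
  by (simp add: inner_add_left inner_add_right inner_commute)

lemma comb_eq_0_iff: "comb (a, c) = 0 \<longleftrightarrow> a = 0 \<and> c = 0"
proof -
  have "comb (a, c) = 0 \<longleftrightarrow> a\<^sup>2 * (v1 \<bullet> v1) + c\<^sup>2 * (v2 \<bullet> v2) = 0"
    using inner_eq_zero_iff[of "comb (a, c)"] unfolding inner_comb by (simp add: power2_eq_square)
  moreover have "v1 \<bullet> v1 > 0" "v2 \<bullet> v2 > 0" using v1_nonzero v2_nonzero by simp_all
  ultimately show ?thesis by (simp add: add_nonneg_eq_0_iff)
qed

lemma span_eq_range_comb: "span {v1, v2} = range comb"
proof
  show "span {v1, v2} \<subseteq> range comb"
  proof
    fix v assume "v \<in> span {v1, v2}"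
    then obtain a where "v - a *\<^sub>R v1 \<in> span {v2}"
      unfolding span_breakdown_eq by blast
    then obtain c where "v - a *\<^sub>R v1 = c *\<^sub>R v2"
      unfolding span_singleton by auto
    then have "v = comb (a, c)" unfolding comb_def by (simp add: algebra_simps)
    then show "v \<in> range comb" by blast
  qed
  show "range comb \<subseteq> span {v1, v2}"
    unfolding comb_def by (auto intro: span_add span_scale span_base)
qed

lemma aa_double_step_comb:
  assumes FP: "\<And>y. FP y - xstar = L (y - xstar)"
    and opt: "\<forall>\<beta>. norm (DeltaFP FP (FP y) + \<alpha> *\<^sub>R (DeltaFP FP y - DeltaFP FP (FP y)))
                  \<le> norm (DeltaFP FP (FP y) + \<beta> *\<^sub>R (DeltaFP FP y - DeltaFP FP (FP y)))"
    and e: "y - xstar = comb (a, c)"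
  shows "FP (FP y) + \<alpha> *\<^sub>R (FP y - FP (FP y)) - xstar = comb (coeff_step (a, c))"
proof -
  have e1: "FP y - xstar = comb (l1 * a, l2 * c)"
    using FP e L_comb by simp
  have e2: "FP (FP y) - xstar = comb (l1 * (l1 * a), l2 * (l2 * c))"
    using FP e1 L_comb by simp
  have Delta: "DeltaFP FP z = (FP z - xstar) - (z - xstar)" for z
    unfolding DeltaFP_def by simp
  have D0: "DeltaFP FP y = comb (a * (l1 - 1), c * (l2 - 1))"
    unfolding Delta e e1 comb_diff by (simp add: algebra_simps)
  have D1: "DeltaFP FP (FP y) = comb (a * l1 * (l1 - 1), c * l2 * (l2 - 1))"
    unfolding Delta e1 e2 comb_diff by (simp add: algebra_simps)
  have "FP (FP y) + \<alpha> *\<^sub>R (FP y - FP (FP y)) - xstar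
      = (FP (FP y) - xstar) + \<alpha> *\<^sub>R ((FP y - xstar) - (FP (FP y) - xstar))"
    by simp
  also have "\<dots> = comb (a * l1 * (l1 - \<alpha> * (l1 - 1)), c * l2 * (l2 - \<alpha> * (l2 - 1)))"
    unfolding e1 e2 comb_diff comb_scaleR[symmetric] comb_add by (simp add: algebra_simps)
  finally have next_eq: "FP (FP y) + \<alpha> *\<^sub>R (FP y - FP (FP y)) - xstar = \<dots>" .
  have "\<alpha> = mixing_coeff a c" if "a \<noteq> 0 \<or> c \<noteq> 0"
  proof -
    have w: "DeltaFP FP y - DeltaFP FP (FP y) = comb (- a * (l1 - 1)\<^sup>2, - c * (l2 - 1)\<^sup>2)"
      unfolding D0 D1 comb_diff by (simp add: algebra_simps power2_eq_square)
    have "comb (- a * (l1 - 1)\<^sup>2, - c * (l2 - 1)\<^sup>2) \<noteq> 0"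
      using that l1_ne_1 l2_ne_1 by (simp add: comb_eq_0_iff)
    from norm_add_scaleR_argmin[OF this opt[unfolded w]]
    show ?thesis
      unfolding D1 inner_comb mixing_coeff_def lsq_den_def
      by (simp add: algebra_simps power_def)
  qed
  then show ?thesis
    unfolding next_eq coeff_step_def by (cases "a = 0 \<and> c = 0") simp_all
qed

lemma AA_star1_seq_double_step:
  assumes "AA_star1_seq FP x alpha" and FP: "\<And>y. FP y - xstar = L (y - xstar)"
    and "even i" and e: "x i - xstar = comb (a, c)"
  shows "x (i + 2) - xstar = comb (coeff_step (a, c))"
proof -
  have x1: "x (i + 1) = FP (x i)"
    and opt: "\<forall>\<beta>. norm (DeltaFP FP (x (i + 1)) + alpha (i + 1) *\<^sub>R (DeltaFP FP (x i) - DeltaFP FP (x (i + 1))))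
              \<le> norm (DeltaFP FP (x (i + 1)) + \<beta> *\<^sub>R (DeltaFP FP (x i) - DeltaFP FP (x (i + 1))))"
    and x2: "x (i + 2) = FP (x (i + 1)) + alpha (i + 1) *\<^sub>R (FP (x i) - FP (x (i + 1)))"
    using assms(1,3) unfolding AA_star1_seq_def by blast+
  show ?thesis
    unfolding x2 x1 by (rule aa_double_step_comb[OF FP opt[unfolded x1] e])
qed

lemma AA_star1_seq_contraction:
  assumes AA: "AA_star1_seq FP x alpha" and FP: "\<And>y. FP y - xstar = L (y - xstar)"
    and x0: "x 0 - xstar \<in> span {v1, v2}" and "4 dvd i"
  shows "norm (x (i + 4) - xstar) \<le> rate l1 l2 * norm (x i - xstar)"
proof -
  have even_in_span: "\<exists>p. x (2 * m) - xstar = comb p" for m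
  proof (induction m)
    case 0
    then show ?case using x0 unfolding span_eq_range_comb by auto
  next
    case (Suc m)
    then obtain a c where "x (2 * m) - xstar = comb (a, c)" by auto
    from AA_star1_seq_double_step[OF AA FP _ this]
    have "x (2 * Suc m) - xstar = comb (coeff_step (a, c))" by simp
    then show ?case by blast
  qed
  obtain j where "i = 2 * (2 * j)" using \<open>4 dvd i\<close> by auto
  then obtain a c where e: "x i - xstar = comb (a, c)" and "even i"
    using even_in_span by (metis surj_pair even_mult_iff even_numeral)
  obtain a' c' where p': "coeff_step (a, c) = (a', c')" by fastforce
  have "x (i + 2) - xstar = comb (a', c')"
    using AA_star1_seq_double_step[OF AA FP \<open>even i\<close> e] unfolding p' .
  then have "x (i + 2 + 2) - xstar = comb (coeff_step (coeff_step (a, c)))"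
    using AA_star1_seq_double_step[OF AA FP] \<open>even i\<close> unfolding p' by simp
  then have "x (i + 4) - xstar = comb (coeff_step (coeff_step (a, c)))"
    by (simp add: eval_nat_numeral)
  moreover obtain M where "coeff_step (coeff_step (a, c)) = M *\<^sub>R (a, c)" and M: "\<bar>M\<bar> \<le> rate l1 l2"
    using coeff_step_twice by blast
  ultimately have "x (i + 4) - xstar = M *\<^sub>R (x i - xstar)"
    using e comb_scaleR[of M "(a, c)"] by simp
  then show ?thesis
    using mult_right_mono[OF M norm_ge_zero] by simp
qed

end

lemma eigenvalue_ne_1_if_invertible:
  fixes A :: "real^'n^'n"
  assumes "invertible (mat 1 - A)" and "A *v v = l *\<^sub>R v" and "v \<noteq> 0"
  shows "l \<noteq> 1"
proof
  assume "l = 1"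
  then have "(mat 1 - A) *v v = 0"
    using assms(2) by (simp add: matrix_vector_mult_diff_rdistrib)
  then show False
    using assms(1,3) unfolding invertible_left_inverse matrix_left_invertible_ker by blast
qed

theorem lemma3:
  fixes A :: "real^'n^'n" and b xstar v1 v2 :: "real^'n"
    and l1 l2 :: real and x :: "nat \<Rightarrow> real^'n" and alpha :: "nat \<Rightarrow> real"
  assumes "CARD('n) > 1"
    and "transpose A = A"
    and "invertible (mat 1 - A)"
    and "A *v xstar + b = xstar"
    and "v1 \<noteq> 0" and "v2 \<noteq> 0" and "v1 \<bullet> v2 = 0"
    and "A *v v1 = l1 *\<^sub>R v1" and "A *v v2 = l2 *\<^sub>R v2"
    and "l1 \<noteq> 0" and "l2 \<noteq> 0"
    and "x 0 - xstar \<in> span {v1, v2}"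
    and "AA_star1_seq (\<lambda>y. A *v y + b) x alpha"
  shows "\<forall>i. 4 dvd i \<longrightarrow> norm (x (i + 4) - xstar) \<le> rate l1 l2 * norm (x i - xstar)"
proof -
  interpret aa_eigenpair "(*v) A" v1 v2 l1 l2
    using assms(5-9) eigenvalue_ne_1_if_invertible[OF assms(3)]
    by (auto simp: aa_eigenpair_def)
  have "b = xstar - A *v xstar" using assms(4) by (metis add_diff_cancel_left')
  then have "(A *v y + b) - xstar = A *v (y - xstar)" for y
    by (simp add: matrix_vector_mult_diff_distrib)
  then show ?thesis
    using AA_star1_seq_contraction[OF assms(13) _ assms(12)] by blast
qed

end
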